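(* Let $q,r,\mu,\nu$ be positive integers. For all $z\in\mathbb{C}$: \begin{align*} \mathcal{A}(z)&=(\widetilde U_\mu(z)\otimes I_q)\,\mathcal{A}(0)\,(\widetilde W_\nu(z)\otimes I_r),\\ \mathcal{M}(z)&=(I_\mu\otimes\widetilde U_q(z))\,\mathcal{M}(0)\,(I_\nu\otimes\widetilde W_r(z)),\\ \mathcal{M}(z)&=(\widetilde U_\mu(-z)\otimes U_q(z))\,\mathcal{A}(z)\,(\widetilde W_\nu(-z)\otimes W_r(z)),\\ \mathcal{N}(z)&=(U_\mu(z)^{-1}\otimes U_q(z))\,\mathcal{A}(z)\,(W_\nu(z)^{-1}\otimes W_r(z)),\\ \mathcal{N}(z)&=(I_\mu\otimes\widetilde U_q(z))\,\mathcal{N}(0)\,(I_\nu\otimes\widetilde W_r(z)). \end{align*}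
   Context: Matrix indices start at $0$. $u(z)=(1,\dots,z^{q-1})^\top$, $w(z)=(1,\dots,z^{r-1})$, $M(z)=u(z)w(z)$; $\mathcal{M}(z)$ (resp. $\mathcal{N}(z)$) is the $\mu q\times\nu r$ block matrix with $(i,j)$ block $M^{(i+j)}(z)$ (resp. $\frac{1}{i!j!}M^{(i+j)}(z)$), $i<\mu$, $j<\nu$. For $k\ge0$, $A^k(z)\in\mathbb{C}^{q\times r}$ has entries $\frac{k!}{a!b!(k-a-b)!}z^{k-a-b}$ (zero if $a+b>k$), and $\mathcal{A}(z)$ is the $\mu q\times\nu r$ block matrix with $(i,j)$ block $A^{i+j}(z)$. For any $n\ge1$: $U_n(z)\in\mathbb{C}^{n\times n}$ is the matrix $(u_n(z),u_n'(z),\dots,u_n^{(n-1)}(z))$ with $u_n(z)=(1,z,\dots,z^{n-1})^\top$; $W_n(z)=U_n(z)^\top$ is the matrix whose $i$-th row is $w_n^{(i)}(z)$ with $w_n(z)=(1,z,\dots,z^{n-1})$; $\widetilde U_n(z)$ has entries $\binom{i}{j}z^{i-j}$ ($0$ for $j>i$), i.e. its $j$-th column is $u_n^{(j)}(z)/j!$; $\widetilde W_n(z)=\widetilde U_n(z)^\top$, i.e. its $i$-th row is $w_n^{(i)}(z)/i!$. *)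

theory Defs
  imports "HOL-Analysis.Analysis" "Jordan_Normal_Form.Matrix"
begin

definition kron :: "complex mat \<Rightarrow> complex mat \<Rightarrow> complex mat" where
  "kron A B = mat (dim_row A * dim_row B) (dim_col A * dim_col B)
     (\<lambda>(I,J). A $$ (I div dim_row B, J div dim_col B) * B $$ (I mod dim_row B, J mod dim_col B))"

definition mat_inv :: "complex mat \<Rightarrow> complex mat" where
  "mat_inv A = (THE B. B \<in> carrier_mat (dim_row A) (dim_row A) \<and> inverts_mat A B \<and> inverts_mat B A)"

definition block_mat :: "nat \<Rightarrow> nat \<Rightarrow> nat \<Rightarrow> nat \<Rightarrow> (nat \<Rightarrow> nat \<Rightarrow> complex mat) \<Rightarrow> complex mat" where
  "block_mat \<mu> \<nu> q r Blk = mat (\<mu> * q) (\<nu> * r)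
     (\<lambda>(I,J). Blk (I div q) (J div r) $$ (I mod q, J mod r))"

text \<open>k-th derivative M^(k)(z) of M(z) = u(z) w(z), i.e. entries (a,b) are the k-th derivative of z^(a+b).\<close>
definition Mder :: "nat \<Rightarrow> nat \<Rightarrow> nat \<Rightarrow> complex \<Rightarrow> complex mat" where
  "Mder q r k z = mat q r (\<lambda>(a,b). (deriv ^^ k) (\<lambda>x. x ^ (a+b)) z)"

definition Mcal :: "nat \<Rightarrow> nat \<Rightarrow> nat \<Rightarrow> nat \<Rightarrow> complex \<Rightarrow> complex mat" where
  "Mcal q r \<mu> \<nu> z = block_mat \<mu> \<nu> q r (\<lambda>i j. Mder q r (i+j) z)"

definition Ncal :: "nat \<Rightarrow> nat \<Rightarrow> nat \<Rightarrow> nat \<Rightarrow> complex \<Rightarrow> complex mat" where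
  "Ncal q r \<mu> \<nu> z = block_mat \<mu> \<nu> q r
     (\<lambda>i j. (1 / (of_nat (fact i) * of_nat (fact j))) \<cdot>\<^sub>m Mder q r (i+j) z)"

definition Amat :: "nat \<Rightarrow> nat \<Rightarrow> nat \<Rightarrow> complex \<Rightarrow> complex mat" where
  "Amat q r k z = mat q r (\<lambda>(a,b). if a + b \<le> k then
      of_nat (fact k) / (of_nat (fact a) * of_nat (fact b) * of_nat (fact (k - a - b))) * z ^ (k - a - b)
    else 0)"

definition Acal :: "nat \<Rightarrow> nat \<Rightarrow> nat \<Rightarrow> nat \<Rightarrow> complex \<Rightarrow> complex mat" where
  "Acal q r \<mu> \<nu> z = block_mat \<mu> \<nu> q r (\<lambda>i j. Amat q r (i+j) z)"

definition Umat :: "nat \<Rightarrow> complex \<Rightarrow> complex mat" where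
  "Umat n z = mat n n (\<lambda>(i,j). (deriv ^^ j) (\<lambda>x. x ^ i) z)"

definition Wmat :: "nat \<Rightarrow> complex \<Rightarrow> complex mat" where
  "Wmat n z = transpose_mat (Umat n z)"

definition Ut :: "nat \<Rightarrow> complex \<Rightarrow> complex mat" where
  "Ut n z = mat n n (\<lambda>(i,j). if j \<le> i then of_nat (i choose j) * z ^ (i - j) else 0)"

definition Wt :: "nat \<Rightarrow> complex \<Rightarrow> complex mat" where
  "Wt n z = transpose_mat (Ut n z)"

end

theory Submission
  imports Defs
begin

text \<open>By the binomial theorem the matrices \<open>Ut n s\<close> form a one-parameter group,
\<open>Ut n s * Ut n t = Ut n (s + t)\<close>, and \<open>Umat n z = Ut n z * D\<close>, \<open>Wmat n z = D * Wt n z\<close> with \<open>D\<close> the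
diagonal matrix of factorials. A Kronecker factor \<open>1 \<otimes> Q\<close> acts on each block separately, a factor
\<open>P \<otimes> 1\<close> acts on the block indices, and the mixed-product rule moves factors between the two kinds.
This reduces every identity to \<open>z = 0\<close>, where the blocks \<open>Mder q r k 0\<close> and \<open>Amat q r k 0\<close> are
supported on the antidiagonal \<open>a + b = k\<close>, so that the remaining double sums collapse by
Vandermonde's identity. The scalars \<open>1 / (i! j!)\<close> in the blocks of \<open>Ncal\<close> are a block-index
conjugation by \<open>D\<inverse>\<close>, the same factor that appears in \<open>Umat\<inverse> = D\<inverse> * Ut (-z)\<close>.\<close>

lemma index_mult_mat_sum:
  assumes "A \<in> carrier_mat n m" "B \<in> carrier_mat m p" "i < n" "j < p"
  shows "(A * B) $$ (i,j) = (\<Sum>k<m. A $$ (i,k) * B $$ (k,j))"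
  using assms by (auto simp: scalar_prod_def atLeast0LessThan intro!: sum.cong)

lemma index_mult_mult_mat_sum:
  assumes A: "A \<in> carrier_mat n1 n2" and B: "B \<in> carrier_mat n2 n3" and C: "C \<in> carrier_mat n3 n4"
    and "i < n1" "j < n4"
  shows "(A * B * C) $$ (i,j) = (\<Sum>k<n2. \<Sum>l<n3. A $$ (i,k) * B $$ (k,l) * C $$ (l,j))"
proof -
  have "(A * B * C) $$ (i,j) = (\<Sum>l<n3. (A * B) $$ (i,l) * C $$ (l,j))"
    by (rule index_mult_mat_sum[OF mult_carrier_mat[OF A B] C]) fact+
  also have "\<dots> = (\<Sum>l<n3. (\<Sum>k<n2. A $$ (i,k) * B $$ (k,l)) * C $$ (l,j))"
    using \<open>i < n1\<close> by (intro sum.cong refl) (simp only: index_mult_mat_sum[OF A B] lessThan_iff)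
  finally show ?thesis by (simp add: sum_distrib_right sum.swap[of _ "{..<n3}"])
qed

lemma assoc_mult_mat_sandwich:
  fixes A B C D E :: "'a::semiring_0 mat"
  assumes A: "A \<in> carrier_mat n1 n2" and B: "B \<in> carrier_mat n2 n2" and C: "C \<in> carrier_mat n2 n3"
    and D: "D \<in> carrier_mat n3 n3" and E: "E \<in> carrier_mat n3 n4"
  shows "A * (B * C * D) * E = A * B * C * (D * E)"
proof -
  have "A * (B * C * D) * E = A * (B * (C * D)) * E" by (simp only: assoc_mult_mat[OF B C D])
  also have "\<dots> = A * B * (C * D) * E" by (simp only: assoc_mult_mat[OF A B mult_carrier_mat[OF C D]])
  also have "\<dots> = A * B * (C * D * E)"
    by (rule assoc_mult_mat[OF mult_carrier_mat[OF A B] mult_carrier_mat[OF C D] E])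
  also have "\<dots> = A * B * (C * (D * E))" by (simp only: assoc_mult_mat[OF C D E])
  also have "\<dots> = A * B * C * (D * E)"
    by (rule assoc_mult_mat[OF mult_carrier_mat[OF A B] C mult_carrier_mat[OF D E], symmetric])
  finally show ?thesis .
qed

lemma mat_inv_eqI:
  assumes A: "A \<in> carrier_mat n n" and X: "X \<in> carrier_mat n n"
    and AX: "A * X = 1\<^sub>m n" and XA: "X * A = 1\<^sub>m n"
  shows "mat_inv A = X"
  unfolding mat_inv_def
proof (rule the_equality)
  show "X \<in> carrier_mat (dim_row A) (dim_row A) \<and> inverts_mat A X \<and> inverts_mat X A"
    using A X AX XA by (auto simp: inverts_mat_def)
next
  fix B assume "B \<in> carrier_mat (dim_row A) (dim_row A) \<and> inverts_mat A B \<and> inverts_mat B A"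
  then have B: "B \<in> carrier_mat n n" and BA: "B * A = 1\<^sub>m n" using A by (auto simp: inverts_mat_def)
  have "B = B * (A * X)" using B by (simp add: AX)
  also have "\<dots> = (B * A) * X" using assoc_mult_mat[OF B A X] by simp
  also have "\<dots> = X" using X by (simp add: BA)
  finally show "B = X" .
qed

lemma mat_inv_mult_eqI:
  fixes A A' B B' :: "complex mat"
  assumes A: "A \<in> carrier_mat n n" and A': "A' \<in> carrier_mat n n"
    and B: "B \<in> carrier_mat n n" and B': "B' \<in> carrier_mat n n"
    and "A * A' = 1\<^sub>m n" "A' * A = 1\<^sub>m n" "B * B' = 1\<^sub>m n" "B' * B = 1\<^sub>m n"
  shows "mat_inv (A * B) = B' * A'"
proof (rule mat_inv_eqI)
  have "A * B * (B' * A') = A * ((B * B') * A')"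
    by (simp only: assoc_mult_mat[OF A B mult_carrier_mat[OF B' A']] assoc_mult_mat[OF B B' A'])
  then show "A * B * (B' * A') = 1\<^sub>m n" using assms carrier_matD[OF A'] by simp
  have "B' * A' * (A * B) = B' * ((A' * A) * B)"
    by (simp only: assoc_mult_mat[OF B' A' mult_carrier_mat[OF A B]] assoc_mult_mat[OF A' A B])
  then show "B' * A' * (A * B) = 1\<^sub>m n" using assms carrier_matD[OF B] by simp
qed (use assms in simp_all)

lemma transpose_mat_diag: "transpose_mat (mat_diag n f) = mat_diag n f"
  by (rule eq_matI) (auto simp: mat_diag_def)

lemma mult_add_less_mult:
  fixes k c m q :: nat
  assumes "k < m" "c < q"
  shows "k * q + c < m * q"
proof -
  have "k * q + c < Suc k * q" using assms(2) by simp
  also have "\<dots> \<le> m * q" using assms(1) by (intro mult_le_mono1) simp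
  finally show ?thesis .
qed

lemma div_mod_less_of_less_mult:
  fixes I m q :: nat
  assumes "I < m * q"
  shows "I div q < m" "I mod q < q"
  using assms by (auto simp: less_mult_imp_div_less intro!: mod_less_divisor Nat.gr0I)

lemma mult_add_div_mod:
  fixes k c q :: nat
  assumes "c < q"
  shows "(k * q + c) div q = k" "(k * q + c) mod q = c"
  using assms by simp_all

lemma sum_lessThan_mult_div_mod:
  fixes g :: "nat \<Rightarrow> nat \<Rightarrow> 'a::comm_monoid_add"
  shows "(\<Sum>K<m*n. g (K div n) (K mod n)) = (\<Sum>k<m. \<Sum>c<n. g k c)"
proof -
  have "(\<Sum>K<m*n. g (K div n) (K mod n)) = (\<Sum>(k,c)\<in>{..<m}\<times>{..<n}. g k c)"
    by (rule sum.reindex_bij_witness[where i="\<lambda>(k,c). k*n+c" and j="\<lambda>K. (K div n, K mod n)"])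
       (auto simp: mult_add_less_mult mult_add_div_mod div_mod_less_of_less_mult)
  then show ?thesis by (simp add: sum.cartesian_product)
qed

section \<open>Kronecker products of block matrices\<close>

lemma kron_carrier_mat:
  "A \<in> carrier_mat m n \<Longrightarrow> B \<in> carrier_mat p s \<Longrightarrow> kron A B \<in> carrier_mat (m*p) (n * s)"
  by (auto simp: kron_def)

lemma index_kron:
  "A \<in> carrier_mat m n \<Longrightarrow> B \<in> carrier_mat p s \<Longrightarrow> I < m*p \<Longrightarrow> J < n * s \<Longrightarrow>
   kron A B $$ (I,J) = A $$ (I div p, J div s) * B $$ (I mod p, J mod s)"
  by (auto simp: kron_def)

lemma index_kron_mult:
  assumes P: "P \<in> carrier_mat m1 m2" and Q: "Q \<in> carrier_mat q1 q2"
    and X: "X \<in> carrier_mat (m2*q2) n" and "I < m1*q1" "L < n"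
  shows "(kron P Q * X) $$ (I,L) =
    (\<Sum>k<m2. \<Sum>c<q2. P $$ (I div q1, k) * Q $$ (I mod q1, c) * X $$ (k*q2 + c, L))" (is "_ = ?rhs")
proof -
  have "(kron P Q * X) $$ (I,L) = (\<Sum>K<m2*q2. kron P Q $$ (I,K) * X $$ (K,L))"
    by (rule index_mult_mat_sum[OF kron_carrier_mat[OF P Q] X]) fact+
  also have "\<dots> = (\<Sum>K<m2*q2. (\<lambda>k c. P $$ (I div q1, k) * Q $$ (I mod q1, c) * X $$ (k*q2 + c, L))
                      (K div q2) (K mod q2))"
    using assms by (intro sum.cong refl) (simp add: index_kron)
  also have "\<dots> = ?rhs" by (rule sum_lessThan_mult_div_mod)
  finally show ?thesis .
qed

lemma index_mult_kron:
  assumes R: "R \<in> carrier_mat n2 n1" and S: "S \<in> carrier_mat r2 r1"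
    and X: "X \<in> carrier_mat m (n2*r2)" and "L < m" "J < n1*r1"
  shows "(X * kron R S) $$ (L,J) =
    (\<Sum>l<n2. \<Sum>d<r2. X $$ (L, l*r2 + d) * R $$ (l, J div r1) * S $$ (d, J mod r1))" (is "_ = ?rhs")
proof -
  have "(X * kron R S) $$ (L,J) = (\<Sum>K<n2*r2. X $$ (L,K) * kron R S $$ (K,J))"
    by (rule index_mult_mat_sum[OF X kron_carrier_mat[OF R S]]) fact+
  also have "\<dots> = (\<Sum>K<n2*r2. (\<lambda>l d. X $$ (L, l*r2 + d) * R $$ (l, J div r1) * S $$ (d, J mod r1))
                      (K div r2) (K mod r2))"
    using assms by (intro sum.cong refl) (simp add: index_kron mult.assoc)
  also have "\<dots> = ?rhs" by (rule sum_lessThan_mult_div_mod)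
  finally show ?thesis .
qed

lemma kron_mult_kron:
  assumes A: "A \<in> carrier_mat m n" and B: "B \<in> carrier_mat p s"
    and C: "C \<in> carrier_mat n k" and D: "D \<in> carrier_mat s t"
  shows "kron A B * kron C D = kron (A*C) (B*D)"
proof (rule eq_matI)
  fix I J assume "I < dim_row (kron (A*C) (B*D))" "J < dim_col (kron (A*C) (B*D))"
  then have I: "I < m*p" and J: "J < k*t" using assms by (auto simp: kron_def)
  note Id = div_mod_less_of_less_mult[OF I] and Jd = div_mod_less_of_less_mult[OF J]
  have "(kron A B * kron C D) $$ (I,J) =
      (\<Sum>a<n. \<Sum>c<s. A $$ (I div p, a) * B $$ (I mod p, c) * kron C D $$ (a * s + c, J))"
    by (rule index_kron_mult[OF A B kron_carrier_mat[OF C D] I J])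
  also have "\<dots> =
      (\<Sum>a<n. \<Sum>c<s. A $$ (I div p, a) * B $$ (I mod p, c) * (C $$ (a, J div t) * D $$ (c, J mod t)))"
    using C D J by (intro sum.cong refl) (simp add: index_kron mult_add_less_mult mult_add_div_mod)
  also have "\<dots> = (\<Sum>a<n. A $$ (I div p, a) * C $$ (a, J div t)) * (\<Sum>c<s. B $$ (I mod p, c) * D $$ (c, J mod t))"
    unfolding sum_product by (intro sum.cong refl) (simp add: mult_ac)
  also have "\<dots> = (A*C) $$ (I div p, J div t) * (B*D) $$ (I mod p, J mod t)"
    by (simp only: index_mult_mat_sum[OF A C Id(1) Jd(1)] index_mult_mat_sum[OF B D Id(2) Jd(2)])
  also have "\<dots> = kron (A*C) (B*D) $$ (I,J)"
    by (rule index_kron[symmetric, OF mult_carrier_mat[OF A C] mult_carrier_mat[OF B D] I J])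
  finally show "(kron A B * kron C D) $$ (I,J) = kron (A*C) (B*D) $$ (I,J)" .
qed (use assms in \<open>auto simp: kron_def\<close>)

lemma index_kron_one_right_mult:
  assumes P: "P \<in> carrier_mat m1 m2" and X: "X \<in> carrier_mat (m2*q) n" and I: "I < m1*q" and "L < n"
  shows "(kron P (1\<^sub>m q) * X) $$ (I,L) = (\<Sum>k<m2. P $$ (I div q, k) * X $$ (k*q + I mod q, L))"
proof -
  have "(kron P (1\<^sub>m q) * X) $$ (I,L) =
      (\<Sum>k<m2. \<Sum>c<q. P $$ (I div q, k) * 1\<^sub>m q $$ (I mod q, c) * X $$ (k*q + c, L))"
    by (rule index_kron_mult[OF P one_carrier_mat X]) fact+
  also have "\<dots> = (\<Sum>k<m2. \<Sum>c<q. if c = I mod q then P $$ (I div q, k) * X $$ (k*q + c, L) else 0)"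
    by (intro sum.cong refl) auto
  finally show ?thesis using div_mod_less_of_less_mult(2)[OF I] by simp
qed

lemma index_mult_kron_one_right:
  assumes R: "R \<in> carrier_mat n2 n1" and X: "X \<in> carrier_mat m (n2*r)" and "L < m" and J: "J < n1*r"
  shows "(X * kron R (1\<^sub>m r)) $$ (L,J) = (\<Sum>l<n2. X $$ (L, l*r + J mod r) * R $$ (l, J div r))"
proof -
  have "(X * kron R (1\<^sub>m r)) $$ (L,J) =
      (\<Sum>l<n2. \<Sum>d<r. X $$ (L, l*r + d) * R $$ (l, J div r) * 1\<^sub>m r $$ (d, J mod r))"
    by (rule index_mult_kron[OF R one_carrier_mat X]) fact+
  also have "\<dots> = (\<Sum>l<n2. \<Sum>d<r. if d = J mod r then X $$ (L, l*r + d) * R $$ (l, J div r) else 0)"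
    by (intro sum.cong refl) auto
  finally show ?thesis using div_mod_less_of_less_mult(2)[OF J] by simp
qed

lemma index_kron_one_left_mult:
  assumes Q: "Q \<in> carrier_mat q1 q2" and X: "X \<in> carrier_mat (m*q2) n" and I: "I < m*q1" and "L < n"
  shows "(kron (1\<^sub>m m) Q * X) $$ (I,L) = (\<Sum>c<q2. Q $$ (I mod q1, c) * X $$ ((I div q1)*q2 + c, L))"
proof -
  have "(kron (1\<^sub>m m) Q * X) $$ (I,L) =
      (\<Sum>k<m. \<Sum>c<q2. 1\<^sub>m m $$ (I div q1, k) * Q $$ (I mod q1, c) * X $$ (k*q2 + c, L))"
    by (rule index_kron_mult[OF one_carrier_mat Q X]) fact+
  also have "\<dots> = (\<Sum>k<m. if k = I div q1 then \<Sum>c<q2. Q $$ (I mod q1, c) * X $$ (k*q2 + c, L) else 0)"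
    using div_mod_less_of_less_mult(1)[OF I] by (intro sum.cong refl) auto
  finally show ?thesis using div_mod_less_of_less_mult(1)[OF I] by simp
qed

lemma index_mult_kron_one_left:
  assumes S: "S \<in> carrier_mat r2 r1" and X: "X \<in> carrier_mat m (n*r2)" and "L < m" and J: "J < n*r1"
  shows "(X * kron (1\<^sub>m n) S) $$ (L,J) = (\<Sum>d<r2. X $$ (L, (J div r1)*r2 + d) * S $$ (d, J mod r1))"
proof -
  have "(X * kron (1\<^sub>m n) S) $$ (L,J) =
      (\<Sum>l<n. \<Sum>d<r2. X $$ (L, l*r2 + d) * 1\<^sub>m n $$ (l, J div r1) * S $$ (d, J mod r1))"
    by (rule index_mult_kron[OF one_carrier_mat S X]) fact+
  also have "\<dots> = (\<Sum>l<n. if l = J div r1 then \<Sum>d<r2. X $$ (L, l*r2 + d) * S $$ (d, J mod r1) else 0)"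
    using div_mod_less_of_less_mult(1)[OF J] by (intro sum.cong refl) auto
  finally show ?thesis using div_mod_less_of_less_mult(1)[OF J] by simp
qed

lemma block_mat_carrier: "block_mat m n q r B \<in> carrier_mat (m*q) (n*r)"
  by (simp add: block_mat_def)

lemma index_block_mat:
  "I < m*q \<Longrightarrow> J < n*r \<Longrightarrow> block_mat m n q r B $$ (I,J) = B (I div q) (J div r) $$ (I mod q, J mod r)"
  by (simp add: block_mat_def)

lemma index_block_mat_mult_add:
  assumes "k < m" "c < q" "l < n" "d < r"
  shows "block_mat m n q r B $$ (k*q + c, l*r + d) = B k l $$ (c,d)"
  using assms by (simp add: index_block_mat mult_add_less_mult mult_add_div_mod)

lemma block_mat_eqI:
  assumes "\<And>i j a b. i < m \<Longrightarrow> j < n \<Longrightarrow> a < q \<Longrightarrow> b < r \<Longrightarrow> B i j $$ (a,b) = B' i j $$ (a,b)"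
  shows "block_mat m n q r B = block_mat m n q r B'"
proof (rule eq_matI)
  fix I J assume "I < dim_row (block_mat m n q r B')" "J < dim_col (block_mat m n q r B')"
  then have I: "I < m * q" and J: "J < n * r" by (auto simp: block_mat_def)
  show "block_mat m n q r B $$ (I,J) = block_mat m n q r B' $$ (I,J)"
    using I J div_mod_less_of_less_mult[OF I] div_mod_less_of_less_mult[OF J]
    by (simp add: index_block_mat assms)
qed (auto simp: block_mat_def)

lemma kron_one_left_block_mat_sandwich:
  assumes Q: "Q \<in> carrier_mat q1 q2" and S: "S \<in> carrier_mat r2 r1"
    and B: "\<And>i j. i < m \<Longrightarrow> j < n \<Longrightarrow> B i j \<in> carrier_mat q2 r2"
  shows "kron (1\<^sub>m m) Q * block_mat m n q2 r2 B * kron (1\<^sub>m n) S = block_mat m n q1 r1 (\<lambda>i j. Q * B i j * S)"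
proof (rule eq_matI)
  fix I J assume "I < dim_row (block_mat m n q1 r1 (\<lambda>i j. Q * B i j * S))"
    "J < dim_col (block_mat m n q1 r1 (\<lambda>i j. Q * B i j * S))"
  then have I: "I < m*q1" and J: "J < n*r1" by (simp_all add: block_mat_def)
  define i a j b where "i = I div q1" "a = I mod q1" "j = J div r1" "b = J mod r1"
  have ij: "i < m" "a < q1" "j < n" "b < r1"
    using div_mod_less_of_less_mult[OF I] div_mod_less_of_less_mult[OF J] by (simp_all add: i_a_j_b_def)
  let ?X = "kron (1\<^sub>m m) Q * block_mat m n q2 r2 B"
  have X: "?X \<in> carrier_mat (m*q1) (n*r2)"
    by (rule mult_carrier_mat[OF kron_carrier_mat[OF one_carrier_mat Q] block_mat_carrier])
  have "(?X * kron (1\<^sub>m n) S) $$ (I,J) = (\<Sum>d<r2. ?X $$ (I, j*r2 + d) * S $$ (d, b))"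
    unfolding i_a_j_b_def by (rule index_mult_kron_one_left[OF S X I J])
  also have "\<dots> = (\<Sum>d<r2. (\<Sum>c<q2. Q $$ (a,c) * B i j $$ (c,d)) * S $$ (d,b))"
  proof (intro sum.cong refl arg_cong2[where f = "(*)"])
    fix d assume d: "d \<in> {..<r2}"
    then have "j*r2 + d < n*r2" using ij by (simp add: mult_add_less_mult)
    then have "?X $$ (I, j*r2 + d) = (\<Sum>c<q2. Q $$ (a,c) * block_mat m n q2 r2 B $$ (i*q2 + c, j*r2 + d))"
      unfolding i_a_j_b_def by (rule index_kron_one_left_mult[OF Q block_mat_carrier I])
    also have "\<dots> = (\<Sum>c<q2. Q $$ (a,c) * B i j $$ (c,d))"
      using ij d by (intro sum.cong refl) (simp add: index_block_mat_mult_add)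
    finally show "?X $$ (I, j*r2 + d) = (\<Sum>c<q2. Q $$ (a,c) * B i j $$ (c,d))" .
  qed
  also have "\<dots> = (Q * B i j * S) $$ (a,b)"
    using ij mult_carrier_mat[OF Q B[OF ij(1,3)]]
    by (simp add: index_mult_mat_sum[OF _ S] index_mult_mat_sum[OF Q B[OF ij(1,3)]])
  also have "\<dots> = block_mat m n q1 r1 (\<lambda>i j. Q * B i j * S) $$ (I,J)"
    using I J by (simp add: index_block_mat i_a_j_b_def)
  finally show "(?X * kron (1\<^sub>m n) S) $$ (I,J) = block_mat m n q1 r1 (\<lambda>i j. Q * B i j * S) $$ (I,J)" .
qed (use Q S in \<open>simp_all add: block_mat_def kron_def\<close>)

lemma kron_one_right_block_mat_sandwich:
  assumes P: "P \<in> carrier_mat m1 m2" and R: "R \<in> carrier_mat n2 n1"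
  shows "kron P (1\<^sub>m q) * block_mat m2 n2 q r B * kron R (1\<^sub>m r) = block_mat m1 n1 q r
    (\<lambda>i j. mat q r (\<lambda>(a,b). \<Sum>k<m2. \<Sum>l<n2. P $$ (i,k) * R $$ (l,j) * B k l $$ (a,b)))"
    (is "_ = block_mat m1 n1 q r ?C")
proof (rule eq_matI)
  fix I J assume "I < dim_row (block_mat m1 n1 q r ?C)" "J < dim_col (block_mat m1 n1 q r ?C)"
  then have I: "I < m1*q" and J: "J < n1*r" by (simp_all add: block_mat_def)
  define i a j b where "i = I div q" "a = I mod q" "j = J div r" "b = J mod r"
  have ij: "i < m1" "a < q" "j < n1" "b < r"
    using div_mod_less_of_less_mult[OF I] div_mod_less_of_less_mult[OF J] by (simp_all add: i_a_j_b_def)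
  let ?X = "kron P (1\<^sub>m q) * block_mat m2 n2 q r B"
  have X: "?X \<in> carrier_mat (m1*q) (n2*r)"
    by (rule mult_carrier_mat[OF kron_carrier_mat[OF P one_carrier_mat] block_mat_carrier])
  have "(?X * kron R (1\<^sub>m r)) $$ (I,J) = (\<Sum>l<n2. ?X $$ (I, l*r + b) * R $$ (l, j))"
    unfolding i_a_j_b_def by (rule index_mult_kron_one_right[OF R X I J])
  also have "\<dots> = (\<Sum>l<n2. (\<Sum>k<m2. P $$ (i,k) * B k l $$ (a,b)) * R $$ (l,j))"
  proof (intro sum.cong refl arg_cong2[where f = "(*)"])
    fix l assume l: "l \<in> {..<n2}"
    then have "l*r + b < n2*r" using ij by (simp add: mult_add_less_mult)
    then have "?X $$ (I, l*r + b) = (\<Sum>k<m2. P $$ (i,k) * block_mat m2 n2 q r B $$ (k*q + a, l*r + b))"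
      unfolding i_a_j_b_def by (rule index_kron_one_right_mult[OF P block_mat_carrier I])
    also have "\<dots> = (\<Sum>k<m2. P $$ (i,k) * B k l $$ (a,b))"
      using ij l by (intro sum.cong refl) (simp add: index_block_mat_mult_add)
    finally show "?X $$ (I, l*r + b) = (\<Sum>k<m2. P $$ (i,k) * B k l $$ (a,b))" .
  qed
  also have "\<dots> = (\<Sum>k<m2. \<Sum>l<n2. P $$ (i,k) * R $$ (l,j) * B k l $$ (a,b))"
    unfolding sum_distrib_right by (subst sum.swap) (simp add: mult_ac)
  also have "\<dots> = block_mat m1 n1 q r ?C $$ (I,J)"
    using I J ij by (simp add: index_block_mat i_a_j_b_def)
  finally show "(?X * kron R (1\<^sub>m r)) $$ (I,J) = block_mat m1 n1 q r ?C $$ (I,J)" .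
qed (use P R in \<open>simp_all add: block_mat_def kron_def\<close>)

lemma kron_mat_diag_one: "kron (mat_diag m f) (1\<^sub>m q) = mat_diag (m*q) (\<lambda>I. f (I div q))"
proof (rule eq_matI)
  fix I J assume "I < dim_row (mat_diag (m*q) (\<lambda>I. f (I div q)))" "J < dim_col (mat_diag (m*q) (\<lambda>I. f (I div q)))"
  then have I: "I < m*q" and J: "J < m*q" by (simp_all add: mat_diag_def)
  have "I = J \<longleftrightarrow> I div q = J div q \<and> I mod q = J mod q"
    by (metis div_mult_mod_eq)
  then show "kron (mat_diag m f) (1\<^sub>m q) $$ (I,J) = mat_diag (m*q) (\<lambda>I. f (I div q)) $$ (I,J)"
    using I J div_mod_less_of_less_mult[OF I] div_mod_less_of_less_mult[OF J]
    by (subst index_kron[OF mat_diag_dim one_carrier_mat I J]) (auto simp: mat_diag_def)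
qed (simp_all add: kron_def mat_diag_def)

lemma kron_diag_one_block_mat_sandwich:
  assumes B: "\<And>i j. i < m \<Longrightarrow> j < n \<Longrightarrow> B i j \<in> carrier_mat q r"
  shows "kron (mat_diag m f) (1\<^sub>m q) * block_mat m n q r B * kron (mat_diag n g) (1\<^sub>m r)
    = block_mat m n q r (\<lambda>i j. (f i * g j) \<cdot>\<^sub>m B i j)"
proof -
  have "kron (mat_diag m f) (1\<^sub>m q) * block_mat m n q r B * kron (mat_diag n g) (1\<^sub>m r) =
      mat (m*q) (n*r) (\<lambda>(I,J). f (I div q) * block_mat m n q r B $$ (I,J) * g (J div r))"
    unfolding kron_mat_diag_one
    by (auto simp: mat_diag_mult_left[OF block_mat_carrier] mat_diag_mult_right[of _ "m*q"] intro!: eq_matI)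
  also have "\<dots> = block_mat m n q r (\<lambda>i j. (f i * g j) \<cdot>\<^sub>m B i j)"
  proof (rule eq_matI)
    fix I J assume "I < dim_row (block_mat m n q r (\<lambda>i j. (f i * g j) \<cdot>\<^sub>m B i j))"
      "J < dim_col (block_mat m n q r (\<lambda>i j. (f i * g j) \<cdot>\<^sub>m B i j))"
    then have I: "I < m*q" and J: "J < n*r" by (simp_all add: block_mat_def)
    show "mat (m*q) (n*r) (\<lambda>(I,J). f (I div q) * block_mat m n q r B $$ (I,J) * g (J div r)) $$ (I,J) =
        block_mat m n q r (\<lambda>i j. (f i * g j) \<cdot>\<^sub>m B i j) $$ (I,J)"
      using I J div_mod_less_of_less_mult[OF I] div_mod_less_of_less_mult[OF J]
        B[OF div_mod_less_of_less_mult(1)[OF I] div_mod_less_of_less_mult(1)[OF J]]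
      by (simp add: index_block_mat mult_ac)
  qed (simp_all add: block_mat_def)
  finally show ?thesis .
qed

section \<open>Derivatives of powers and binomial sums\<close>

lemma higher_deriv_power:
  "(deriv ^^ k) (\<lambda>x::complex. x ^ n) = (\<lambda>x. of_nat (fact k * (n choose k)) * x ^ (n - k))"
proof (induction k)
  case 0
  then show ?case by simp
next
  case (Suc k)
  have "fact (Suc k) * (n choose Suc k) = fact k * (Suc k * (n choose Suc k))"
    by (simp only: fact_Suc of_nat_id mult_ac)
  also have "\<dots> = fact k * ((n - k) * (n choose k))"
    by (simp only: binomial_absorption binomial_absorb_comp)
  finally have coeff: "fact (Suc k) * (n choose Suc k) = fact k * (n choose k) * (n - k)"
    by (simp only: mult_ac)
  have deriv: "deriv (\<lambda>x. c * x ^ m) x = c * (of_nat m * x ^ (m - 1))" for c x :: complex and m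
    by (rule DERIV_imp_deriv, rule DERIV_cmult, rule DERIV_power[OF DERIV_ident, THEN DERIV_cong]) simp
  show ?case
    unfolding coeff funpow.simps o_apply Suc
    by (rule ext) (simp only: deriv, simp only: of_nat_mult mult.assoc diff_diff_left Suc_eq_plus1)
qed

lemma sum_choose_mult_choose_power:
  fixes s t :: complex
  assumes "i < n"
  shows "(\<Sum>k<n. of_nat (i choose k) * s ^ (i - k) * (of_nat (k choose j) * t ^ (k - j)))
    = of_nat (i choose j) * (s + t) ^ (i - j)"
proof (cases "j \<le> i")
  case True
  define f where "f k = of_nat (i choose k) * s ^ (i - k) * (of_nat (k choose j) * t ^ (k - j))" for k
  have "(\<Sum>k<n. f k) = (\<Sum>k\<in>{j..i}. f k)"
    by (rule sum.mono_neutral_right) (use assms in \<open>auto simp: f_def\<close>)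
  also have "\<dots> = (\<Sum>m\<le>i-j. f (m + j))"
    using True sum.shift_bounds_cl_nat_ivl[of f 0 j "i - j"] by (simp add: atLeast0AtMost)
  also have "\<dots> = (\<Sum>m\<le>i-j. of_nat (i choose j) * (of_nat ((i - j) choose m) * t ^ m * s ^ (i - j - m)))"
  proof (rule sum.cong[OF refl])
    fix m assume m: "m \<in> {..i-j}"
    have "(i choose (m + j)) * ((m + j) choose j) = (i choose j) * ((i - j) choose m)"
      using choose_mult[of j "m + j" i] m True by simp
    then have "(of_nat (i choose (m + j)) :: complex) * of_nat ((m + j) choose j)
        = of_nat (i choose j) * of_nat ((i - j) choose m)"
      by (metis of_nat_mult)
    moreover have "i - (m + j) = i - j - m" by simp
    ultimately show "f (m + j) = of_nat (i choose j) * (of_nat ((i - j) choose m) * t ^ m * s ^ (i - j - m))"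
      unfolding f_def by (simp add: mult_ac)
  qed
  also have "\<dots> = of_nat (i choose j) * (t + s) ^ (i - j)"
    by (simp only: binomial_ring sum_distrib_left)
  finally show ?thesis by (simp add: f_def add.commute)
next
  case False
  then have "of_nat (i choose k) * s ^ (i - k) * (of_nat (k choose j) * t ^ (k - j)) = 0" for k
    by (cases "k \<le> i") auto
  then show ?thesis using False by (simp only: sum.neutral_const) simp
qed

lemma vandermonde_lessThan:
  fixes i j n K L :: nat
  assumes "i < K" "j < L"
  shows "(\<Sum>k<K. \<Sum>l<L. if k + l = n then (i choose k) * (j choose l) else 0) = (i + j) choose n"
proof -
  define g where "g k = (if k \<le> n then (i choose k) * (j choose (n - k)) else 0)" for k
  have inner: "(\<Sum>l<L. if k + l = n then (i choose k) * (j choose l) else 0) = g k" for k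
  proof (cases "k \<le> n")
    case True
    have "(\<Sum>l<L. if k + l = n then (i choose k) * (j choose l) else 0)
        = (\<Sum>l<L. if l = n - k then (i choose k) * (j choose l) else 0)"
      using True by (intro sum.cong refl) auto
    then show ?thesis using assms(2) True by (auto simp: g_def)
  qed (auto simp: g_def intro!: sum.neutral)
  have g_zero: "g k = 0" if "k > i \<or> k > n" for k using that by (auto simp: g_def)
  have "(\<Sum>k<K. g k) = (\<Sum>k\<le>i. g k)"
    by (rule sum.mono_neutral_right) (use assms g_zero in auto)
  also have "\<dots> = (\<Sum>k\<le>i+n. g k)"
    by (rule sum.mono_neutral_left) (use g_zero in auto)
  also have "\<dots> = (\<Sum>k\<le>n. g k)"
    by (rule sum.mono_neutral_right) (use g_zero in auto)
  also have "\<dots> = (\<Sum>k\<le>n. (i choose k) * (j choose (n - k)))"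
    by (intro sum.cong refl) (auto simp: g_def)
  finally show ?thesis by (simp add: inner vandermonde)
qed

text \<open>The left-hand side is the coefficient of \<open>x^n\<close> in \<open>c (z + x)^i (z + x)^j\<close>.\<close>
lemma binomial_power_convolution:
  fixes z c :: complex
  assumes "i < K" "j < L"
  shows "(\<Sum>k<K. \<Sum>l<L. of_nat (i choose k) * z ^ (i - k) * (of_nat (j choose l) * z ^ (j - l))
            * (if k + l = n then c else 0))
    = of_nat ((i + j) choose n) * z ^ (i + j - n) * c"
proof -
  have summand: "of_nat (i choose k) * z ^ (i - k) * (of_nat (j choose l) * z ^ (j - l)) * (if k + l = n then c else 0)
     = of_nat (if k + l = n then (i choose k) * (j choose l) else 0) * (z ^ (i + j - n) * c)" for k l
  proof (cases "k \<le> i \<and> l \<le> j \<and> k + l = n")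
    case True
    then have "z ^ (i - k) * z ^ (j - l) = z ^ (i + j - n)" by (simp add: power_add[symmetric])
    then show ?thesis using True by (simp add: mult_ac)
  qed auto
  show ?thesis
    unfolding summand sum_distrib_right[symmetric] of_nat_sum[symmetric] vandermonde_lessThan[OF assms]
    by (simp only: mult.assoc)
qed

section \<open>The matrices U, W, M and A\<close>

lemma Ut_carrier: "Ut n z \<in> carrier_mat n n" by (simp add: Ut_def)
lemma Wt_carrier: "Wt n z \<in> carrier_mat n n" by (simp add: Wt_def Ut_def)
lemma Umat_carrier: "Umat n z \<in> carrier_mat n n" by (simp add: Umat_def)
lemma Wmat_carrier: "Wmat n z \<in> carrier_mat n n" by (simp add: Wmat_def Umat_def)
lemma Mder_carrier: "Mder q r k z \<in> carrier_mat q r" by (simp add: Mder_def)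
lemma Amat_carrier: "Amat q r k z \<in> carrier_mat q r" by (simp add: Amat_def)

lemma index_Ut: "i < n \<Longrightarrow> j < n \<Longrightarrow> Ut n z $$ (i,j) = of_nat (i choose j) * z ^ (i - j)"
  by (simp add: Ut_def)

lemma index_Wt: "i < n \<Longrightarrow> j < n \<Longrightarrow> Wt n z $$ (i,j) = of_nat (j choose i) * z ^ (j - i)"
  by (simp add: Wt_def Ut_def)

lemma index_Umat: "i < n \<Longrightarrow> j < n \<Longrightarrow> Umat n z $$ (i,j) = of_nat (fact j * (i choose j)) * z ^ (i - j)"
  by (simp add: Umat_def higher_deriv_power)

lemma index_Mder:
  "a < q \<Longrightarrow> b < r \<Longrightarrow> Mder q r k z $$ (a,b) = of_nat (fact k * ((a + b) choose k)) * z ^ (a + b - k)"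
  by (simp add: Mder_def higher_deriv_power)

lemma index_Mder_zero:
  "a < q \<Longrightarrow> b < r \<Longrightarrow> Mder q r k 0 $$ (a,b) = (if a + b = k then of_nat (fact k) else 0)"
  by (auto simp: index_Mder)

lemma index_Amat_zero: "a < q \<Longrightarrow> b < r \<Longrightarrow>
    Amat q r k 0 $$ (a,b) = (if a + b = k then of_nat (fact k) / (of_nat (fact a) * of_nat (fact b)) else 0)"
  by (auto simp: Amat_def)

lemma Ut_add: "Ut n s * Ut n t = Ut n (s + t)"
proof (rule eq_matI)
  fix i j assume "i < dim_row (Ut n (s + t))" "j < dim_col (Ut n (s + t))"
  then have "i < n" "j < n" by (auto simp: Ut_def)
  then show "(Ut n s * Ut n t) $$ (i,j) = Ut n (s + t) $$ (i,j)"
    by (simp add: index_mult_mat_sum[OF Ut_carrier Ut_carrier] index_Ut sum_choose_mult_choose_power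
        del: index_mult_mat)
qed (auto simp: Ut_def)

lemma Ut_zero: "Ut n 0 = 1\<^sub>m n"
  by (rule eq_matI) (auto simp: Ut_def)

lemma Wt_add: "Wt n t * Wt n s = Wt n (s + t)"
  unfolding Wt_def by (simp add: transpose_mult[OF Ut_carrier Ut_carrier, symmetric] Ut_add)

lemma Wt_zero: "Wt n 0 = 1\<^sub>m n"
  by (simp add: Wt_def Ut_zero)

definition fact_diag :: "nat \<Rightarrow> complex mat" where
  "fact_diag n = mat_diag n (\<lambda>i. of_nat (fact i))"

definition inv_fact_diag :: "nat \<Rightarrow> complex mat" where
  "inv_fact_diag n = mat_diag n (\<lambda>i. 1 / of_nat (fact i))"

lemma fact_diag_carrier: "fact_diag n \<in> carrier_mat n n" by (simp add: fact_diag_def)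
lemma inv_fact_diag_carrier: "inv_fact_diag n \<in> carrier_mat n n" by (simp add: inv_fact_diag_def)

lemma fact_diag_inv_fact_diag: "fact_diag n * inv_fact_diag n = 1\<^sub>m n"
  by (simp add: fact_diag_def inv_fact_diag_def)

lemma inv_fact_diag_fact_diag: "inv_fact_diag n * fact_diag n = 1\<^sub>m n"
  by (simp add: fact_diag_def inv_fact_diag_def)

lemma Umat_eq_Ut_fact_diag: "Umat n z = Ut n z * fact_diag n"
  unfolding fact_diag_def mat_diag_mult_right[OF Ut_carrier]
  by (rule eq_matI) (auto simp: index_Umat index_Ut mult_ac carrier_matD[OF Umat_carrier])

lemma Wmat_eq_fact_diag_Wt: "Wmat n z = fact_diag n * Wt n z"
  unfolding Wmat_def Wt_def Umat_eq_Ut_fact_diag fact_diag_def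
  by (simp add: transpose_mult[OF Ut_carrier mat_diag_dim] transpose_mat_diag)

lemma mat_inv_Umat: "mat_inv (Umat n z) = inv_fact_diag n * Ut n (-z)"
  unfolding Umat_eq_Ut_fact_diag
  by (rule mat_inv_mult_eqI[OF Ut_carrier Ut_carrier fact_diag_carrier inv_fact_diag_carrier])
    (simp_all add: Ut_add Ut_zero fact_diag_inv_fact_diag inv_fact_diag_fact_diag)

lemma mat_inv_Wmat: "mat_inv (Wmat n z) = Wt n (-z) * inv_fact_diag n"
  unfolding Wmat_eq_fact_diag_Wt
  by (rule mat_inv_mult_eqI[OF fact_diag_carrier inv_fact_diag_carrier Wt_carrier Wt_carrier])
    (simp_all add: Wt_add Wt_zero fact_diag_inv_fact_diag inv_fact_diag_fact_diag)

lemma Mder_zero_eq_fact_diag_Amat_zero: "Mder q r k 0 = fact_diag q * Amat q r k 0 * fact_diag r"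
proof -
  have "fact_diag q * Amat q r k 0 * fact_diag r
      = mat q r (\<lambda>(a,b). of_nat (fact a) * Amat q r k 0 $$ (a,b) * of_nat (fact b))"
    unfolding fact_diag_def
    by (auto simp: mat_diag_mult_left[OF Amat_carrier] mat_diag_mult_right[of _ q] intro!: eq_matI)
  then show ?thesis
    by (auto intro!: eq_matI simp: index_Mder_zero index_Amat_zero carrier_matD[OF Mder_carrier])
qed

lemma Ut_Mder_zero_Wt: "Ut q z * Mder q r k 0 * Wt r z = Mder q r k z"
proof (rule eq_matI)
  fix a b assume "a < dim_row (Mder q r k z)" "b < dim_col (Mder q r k z)"
  then have ab: "a < q" "b < r" by (simp_all add: Mder_def)
  have "(Ut q z * Mder q r k 0 * Wt r z) $$ (a,b) = (\<Sum>c<q. \<Sum>d<r. of_nat (a choose c) * z ^ (a - c)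
      * (of_nat (b choose d) * z ^ (b - d)) * (if c + d = k then of_nat (fact k) else 0))"
    by (subst index_mult_mult_mat_sum[OF Ut_carrier Mder_carrier Wt_carrier ab])
      (intro sum.cong refl, use ab in \<open>simp add: index_Ut index_Wt index_Mder_zero mult_ac\<close>)
  also have "\<dots> = Mder q r k z $$ (a,b)"
    unfolding binomial_power_convolution[OF ab] using ab by (simp add: index_Mder mult_ac)
  finally show "(Ut q z * Mder q r k 0 * Wt r z) $$ (a,b) = Mder q r k z $$ (a,b)" .
qed (simp_all add: Mder_def Ut_def Wt_def)

lemma Umat_Amat_zero_Wmat: "Umat q z * Amat q r k 0 * Wmat r z = Mder q r k z"
proof -
  have "Umat q z * Amat q r k 0 * Wmat r z = Ut q z * (fact_diag q * Amat q r k 0 * fact_diag r) * Wt r z"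
    unfolding Umat_eq_Ut_fact_diag Wmat_eq_fact_diag_Wt fact_diag_def
    by (rule assoc_mult_mat_sandwich[symmetric, OF Ut_carrier mat_diag_dim Amat_carrier mat_diag_dim Wt_carrier])
  then show ?thesis by (simp add: Mder_zero_eq_fact_diag_Amat_zero[symmetric] Ut_Mder_zero_Wt)
qed

lemma sum_Ut_Wt_Amat_zero:
  assumes "i < m" "j < n" "a < q" "b < r"
  shows "(\<Sum>k<m. \<Sum>l<n. Ut m z $$ (i,k) * Wt n z $$ (l,j) * Amat q r (k+l) 0 $$ (a,b))
     = Amat q r (i+j) z $$ (a,b)"
proof -
  define c :: complex where "c = of_nat (fact (a+b)) / (of_nat (fact a) * of_nat (fact b))"
  have "(\<Sum>k<m. \<Sum>l<n. Ut m z $$ (i,k) * Wt n z $$ (l,j) * Amat q r (k+l) 0 $$ (a,b))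
     = (\<Sum>k<m. \<Sum>l<n. of_nat (i choose k) * z ^ (i - k) * (of_nat (j choose l) * z ^ (j - l))
                        * (if k + l = a + b then c else 0))"
    using assms by (intro sum.cong refl) (auto simp: index_Ut index_Wt index_Amat_zero c_def)
  also have "\<dots> = of_nat ((i + j) choose (a + b)) * z ^ (i + j - (a + b)) * c"
    by (rule binomial_power_convolution[OF assms(1,2)])
  also have "\<dots> = Amat q r (i+j) z $$ (a,b)"
  proof (cases "a + b \<le> i + j")
    case True
    have "(of_nat ((i + j) choose (a + b)) :: complex)
        = of_nat (fact (i + j)) / (of_nat (fact (a + b)) * of_nat (fact (i + j - (a + b))))"
      using binomial_fact[OF True] by simp
    then show ?thesis using True assms by (simp add: Amat_def c_def field_simps diff_diff_left)
  next
    case False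
    then show ?thesis using assms by (simp add: Amat_def)
  qed
  finally show ?thesis .
qed

section \<open>The five identities\<close>

lemma Acal_carrier: "Acal q r m n z \<in> carrier_mat (m*q) (n*r)"
  by (simp add: Acal_def block_mat_carrier)

lemma Acal_shift: "Acal q r m n z = kron (Ut m z) (1\<^sub>m q) * Acal q r m n 0 * kron (Wt n z) (1\<^sub>m r)"
  unfolding Acal_def kron_one_right_block_mat_sandwich[OF Ut_carrier Wt_carrier]
  by (rule block_mat_eqI) (simp add: sum_Ut_Wt_Amat_zero)

lemma Mcal_shift: "Mcal q r m n z = kron (1\<^sub>m m) (Ut q z) * Mcal q r m n 0 * kron (1\<^sub>m n) (Wt r z)"
proof -
  have "kron (1\<^sub>m m) (Ut q z) * Mcal q r m n 0 * kron (1\<^sub>m n) (Wt r z)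
      = block_mat m n q r (\<lambda>i j. Ut q z * Mder q r (i+j) 0 * Wt r z)"
    unfolding Mcal_def by (rule kron_one_left_block_mat_sandwich[OF Ut_carrier Wt_carrier Mder_carrier])
  then show ?thesis by (simp add: Mcal_def Ut_Mder_zero_Wt)
qed

lemma Ncal_shift: "Ncal q r m n z = kron (1\<^sub>m m) (Ut q z) * Ncal q r m n 0 * kron (1\<^sub>m n) (Wt r z)"
proof -
  have "kron (1\<^sub>m m) (Ut q z) * Ncal q r m n 0 * kron (1\<^sub>m n) (Wt r z) = block_mat m n q r
      (\<lambda>i j. Ut q z * ((1 / (of_nat (fact i) * of_nat (fact j))) \<cdot>\<^sub>m Mder q r (i+j) 0) * Wt r z)"
    unfolding Ncal_def
    by (rule kron_one_left_block_mat_sandwich[OF Ut_carrier Wt_carrier smult_carrier_mat[OF Mder_carrier]])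
  then show ?thesis
    by (simp add: Ncal_def mult_smult_distrib[OF Ut_carrier Mder_carrier] Ut_Mder_zero_Wt
        mult_smult_assoc_mat[OF mult_carrier_mat[OF Ut_carrier Mder_carrier] Wt_carrier])
qed

lemma Mcal_from_Acal:
  "Mcal q r m n z = kron (Ut m (-z)) (Umat q z) * Acal q r m n z * kron (Wt n (-z)) (Wmat r z)"
proof -
  have left: "kron (Ut m (-z)) (Umat q z) * kron (Ut m z) (1\<^sub>m q) = kron (1\<^sub>m m) (Umat q z)"
    by (simp add: kron_mult_kron[OF Ut_carrier Umat_carrier Ut_carrier one_carrier_mat] Ut_add Ut_zero
        carrier_matD[OF Umat_carrier])
  have right: "kron (Wt n z) (1\<^sub>m r) * kron (Wt n (-z)) (Wmat r z) = kron (1\<^sub>m n) (Wmat r z)"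
    by (simp add: kron_mult_kron[OF Wt_carrier one_carrier_mat Wt_carrier Wmat_carrier] Wt_add Wt_zero
        carrier_matD[OF Wmat_carrier])
  have "kron (Ut m (-z)) (Umat q z) * Acal q r m n z * kron (Wt n (-z)) (Wmat r z)
     = kron (Ut m (-z)) (Umat q z) * (kron (Ut m z) (1\<^sub>m q) * Acal q r m n 0 * kron (Wt n z) (1\<^sub>m r))
        * kron (Wt n (-z)) (Wmat r z)"
    by (subst Acal_shift) (rule refl)
  also have "\<dots> = kron (1\<^sub>m m) (Umat q z) * Acal q r m n 0 * kron (1\<^sub>m n) (Wmat r z)"
    unfolding left[symmetric] right[symmetric]
    by (rule assoc_mult_mat_sandwich[OF kron_carrier_mat[OF Ut_carrier Umat_carrier]
          kron_carrier_mat[OF Ut_carrier one_carrier_mat] Acal_carrier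
          kron_carrier_mat[OF Wt_carrier one_carrier_mat] kron_carrier_mat[OF Wt_carrier Wmat_carrier]])
  also have "\<dots> = block_mat m n q r (\<lambda>i j. Umat q z * Amat q r (i+j) 0 * Wmat r z)"
    unfolding Acal_def by (rule kron_one_left_block_mat_sandwich[OF Umat_carrier Wmat_carrier Amat_carrier])
  also have "\<dots> = Mcal q r m n z"
    by (simp add: Mcal_def Umat_Amat_zero_Wmat)
  finally show ?thesis by (rule sym)
qed

lemma Ncal_eq_inv_fact_diag_Mcal:
  "Ncal q r m n z = kron (inv_fact_diag m) (1\<^sub>m q) * Mcal q r m n z * kron (inv_fact_diag n) (1\<^sub>m r)"
  unfolding inv_fact_diag_def Mcal_def Ncal_def
  by (subst kron_diag_one_block_mat_sandwich) (simp_all add: Mder_carrier)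

lemma Ncal_from_Acal:
  "Ncal q r m n z = kron (mat_inv (Umat m z)) (Umat q z) * Acal q r m n z * kron (mat_inv (Wmat n z)) (Wmat r z)"
proof -
  have left: "kron (mat_inv (Umat m z)) (Umat q z)
      = kron (inv_fact_diag m) (1\<^sub>m q) * kron (Ut m (-z)) (Umat q z)"
    by (simp add: mat_inv_Umat kron_mult_kron[OF inv_fact_diag_carrier one_carrier_mat Ut_carrier Umat_carrier]
        carrier_matD[OF Umat_carrier])
  have right: "kron (mat_inv (Wmat n z)) (Wmat r z)
      = kron (Wt n (-z)) (Wmat r z) * kron (inv_fact_diag n) (1\<^sub>m r)"
    by (simp add: mat_inv_Wmat kron_mult_kron[OF Wt_carrier Wmat_carrier inv_fact_diag_carrier one_carrier_mat]
        carrier_matD[OF Wmat_carrier])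
  have "kron (mat_inv (Umat m z)) (Umat q z) * Acal q r m n z * kron (mat_inv (Wmat n z)) (Wmat r z)
      = kron (inv_fact_diag m) (1\<^sub>m q)
        * (kron (Ut m (-z)) (Umat q z) * Acal q r m n z * kron (Wt n (-z)) (Wmat r z))
        * kron (inv_fact_diag n) (1\<^sub>m r)"
    unfolding left right
    by (rule assoc_mult_mat_sandwich[symmetric, OF kron_carrier_mat[OF inv_fact_diag_carrier one_carrier_mat]
          kron_carrier_mat[OF Ut_carrier Umat_carrier] Acal_carrier
          kron_carrier_mat[OF Wt_carrier Wmat_carrier] kron_carrier_mat[OF inv_fact_diag_carrier one_carrier_mat]])
  then show ?thesis by (simp only: Mcal_from_Acal[symmetric] Ncal_eq_inv_fact_diag_Mcal[symmetric])
qed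

theorem proposition3p5:
  fixes q r \<mu> \<nu> :: nat and z :: complex
  assumes "q > 0" "r > 0" "\<mu> > 0" "\<nu> > 0"
  shows "Acal q r \<mu> \<nu> z = kron (Ut \<mu> z) (1\<^sub>m q) * Acal q r \<mu> \<nu> 0 * kron (Wt \<nu> z) (1\<^sub>m r) \<and>
    Mcal q r \<mu> \<nu> z = kron (1\<^sub>m \<mu>) (Ut q z) * Mcal q r \<mu> \<nu> 0 * kron (1\<^sub>m \<nu>) (Wt r z) \<and>
    Mcal q r \<mu> \<nu> z = kron (Ut \<mu> (-z)) (Umat q z) * Acal q r \<mu> \<nu> z * kron (Wt \<nu> (-z)) (Wmat r z) \<and>
    Ncal q r \<mu> \<nu> z = kron (mat_inv (Umat \<mu> z)) (Umat q z) * Acal q r \<mu> \<nu> z * kron (mat_inv (Wmat \<nu> z)) (Wmat r z) \<and>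
    Ncal q r \<mu> \<nu> z = kron (1\<^sub>m \<mu>) (Ut q z) * Ncal q r \<mu> \<nu> 0 * kron (1\<^sub>m \<nu>) (Wt r z)"
  by (intro conjI Acal_shift Mcal_shift Mcal_from_Acal Ncal_from_Acal Ncal_shift)

end
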